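(* Let $(G,s,t)$ be an oriented serial superedge with principal subgraphs $(G_1,s_1,t_1),\dots,(G_k,s_k,t_k)$ (so $s_1=s$, $t_i=s_{i+1}$, $t_k=t$), each $G_i$ non-serial. For each $i$ let $\mathcal{T}_i\subseteq\mathsf{ST}(G_i)$ contain exactly one spanning tree from each orbit of $\mathsf{ST}(G_i)$ under $\mathrm{Aut}_{\mathrm{or}}(G_i,s_i,t_i)$. Then the set $\{T_1\cup\dots\cup T_k : T_i\in\mathcal{T}_i\text{ for }1\le i\le k\}$ consists of spanning trees of $G$ and contains exactly one spanning tree from each orbit of $\mathsf{ST}(G)$ under $\mathrm{Aut}_{\mathrm{or}}(G,s,t)$.
   Context: All graphs are finite, simple and undirected. An oriented series-parallel graph is a triple $(G,s,t)$ where $G$ is a graph and $s\neq t$ are vertices, defined recursively: (i) $G$ is a single edge with vertex set $\{s,t\}$; or (ii) (serial superedge) there are $k\ge 2$ oriented series-parallel graphs $(G_1,s_1,t_1),\dots,(G_k,s_k,t_k)$ with $s_1=s$, $t_k=t$, $t_i=s_{i+1}$ for $1\le i<k$, $V(G_i)\cap V(G_{i+1})=\{s_{i+1}\}$, $V(G_i)\cap V(G_j)=\emptyset$ for $|i-j|\ge2$, and $G=G_1\cup\dots\cup G_k$; or (iii) (parallel superedge) there are $k\ge2$ oriented series-parallel graphs $(G_1,s,t),\dots,(G_k,s,t)$ with $V(G_i)\cap V(G_j)=\{s,t\}$ for $i\neq j$ and $G=G_1\cup\dots\cup G_k$. The $G_i$ are the principal subgraphs. A graph is non-serial if it is not a serial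 superedge. For an oriented series-parallel graph $(H,u,v)$, $\mathrm{Aut}_{\mathrm{or}}(H,u,v)$ is the group of automorphisms of $H$ fixing $u$ and $v$, acting on subgraphs of $H$; $\mathsf{ST}(H)$ is the set of spanning trees of $H$. Two subgraphs $A,B$ are in the same orbit iff $A=\sigma(B)$ for some $\sigma$ in the group. *)

theory Defs
  imports Main
begin

text \<open>Graphs are represented by a vertex set V and an edge set E of unordered
pairs (two-element sets) of vertices. Subgraphs (in particular spanning trees)
are represented by their edge sets.\<close>

definition serial_conds ::
  "nat \<Rightarrow> (nat \<Rightarrow> 'a set) \<Rightarrow> (nat \<Rightarrow> 'a) \<Rightarrow> (nat \<Rightarrow> 'a) \<Rightarrow> 'a \<Rightarrow> 'a \<Rightarrow> bool" where
  "serial_conds k Vs ss ts s t \<longleftrightarrow>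
     ss 0 = s \<and> ts (k - 1) = t \<and>
     (\<forall>i. i + 1 < k \<longrightarrow> ts i = ss (i + 1)) \<and>
     (\<forall>i. i + 1 < k \<longrightarrow> Vs i \<inter> Vs (i + 1) = {ss (i + 1)}) \<and>
     (\<forall>i<k. \<forall>j<k. i + 2 \<le> j \<longrightarrow> Vs i \<inter> Vs j = {})"

inductive osp :: "'a set \<Rightarrow> 'a set set \<Rightarrow> 'a \<Rightarrow> 'a \<Rightarrow> bool" where
  edge: "(s::'a) \<noteq> t \<Longrightarrow> osp {s, t} {{s, t}} s t"
| serial: "\<lbrakk>2 \<le> (k::nat); \<forall>i<k. osp (Vs i :: 'a set) (Es i) (ss i) (ts i);
            serial_conds k Vs ss ts s t\<rbrakk>
           \<Longrightarrow> osp (\<Union>i<k. Vs i) (\<Union>i<k. Es i) s t"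
| parallel: "\<lbrakk>2 \<le> (k::nat); \<forall>i<k. osp (Vs i :: 'a set) (Es i) s t;
              \<forall>i<k. \<forall>j<k. i \<noteq> j \<longrightarrow> Vs i \<inter> Vs j = {s, t}\<rbrakk>
           \<Longrightarrow> osp (\<Union>i<k. Vs i) (\<Union>i<k. Es i) s t"

definition serial_superedge :: "'a set \<Rightarrow> 'a set set \<Rightarrow> 'a \<Rightarrow> 'a \<Rightarrow> bool" where
  "serial_superedge V E s t \<longleftrightarrow>
     (\<exists>k Vs Es ss ts. 2 \<le> k \<and> (\<forall>i<k. osp (Vs i) (Es i) (ss i) (ts i)) \<and>
        serial_conds k Vs ss ts s t \<and>
        V = (\<Union>i<k. Vs i) \<and> E = (\<Union>i<k. Es i))"

fun walk :: "'a set set \<Rightarrow> 'a list \<Rightarrow> bool" where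
  "walk E [] = False"
| "walk E [x] = True"
| "walk E (x # y # xs) = ({x, y} \<in> E \<and> walk E (y # xs))"

definition connected_on :: "'a set \<Rightarrow> 'a set set \<Rightarrow> bool" where
  "connected_on V E \<longleftrightarrow>
     (\<forall>x\<in>V. \<forall>y\<in>V. \<exists>xs. walk E xs \<and> hd xs = x \<and> last xs = y \<and> set xs \<subseteq> V)"

definition is_cycle :: "'a set set \<Rightarrow> 'a list \<Rightarrow> bool" where
  "is_cycle E xs \<longleftrightarrow> 3 \<le> length xs \<and> distinct xs \<and> walk E xs \<and> {last xs, hd xs} \<in> E"

definition acyclic_graph :: "'a set set \<Rightarrow> bool" where
  "acyclic_graph E \<longleftrightarrow> \<not> (\<exists>xs. is_cycle E xs)"

definition spanning_trees :: "'a set \<Rightarrow> 'a set set \<Rightarrow> 'a set set set" where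
  "spanning_trees V E = {T. T \<subseteq> E \<and> connected_on V T \<and> acyclic_graph T}"

definition aut_or :: "'a set \<Rightarrow> 'a set set \<Rightarrow> 'a \<Rightarrow> 'a \<Rightarrow> ('a \<Rightarrow> 'a) set" where
  "aut_or V E u v = {\<sigma>. bij_betw \<sigma> V V \<and>
      (\<forall>x\<in>V. \<forall>y\<in>V. {x, y} \<in> E \<longleftrightarrow> {\<sigma> x, \<sigma> y} \<in> E) \<and> \<sigma> u = u \<and> \<sigma> v = v}"

definition act :: "('a \<Rightarrow> 'a) \<Rightarrow> 'a set set \<Rightarrow> 'a set set" where
  "act \<sigma> T = (\<lambda>e. \<sigma> ` e) ` T"

definition orbit :: "('a \<Rightarrow> 'a) set \<Rightarrow> 'a set set \<Rightarrow> 'a set set set" where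
  "orbit Grp T = {act \<sigma> T | \<sigma>. \<sigma> \<in> Grp}"

definition orbit_transversal ::
  "('a \<Rightarrow> 'a) set \<Rightarrow> 'a set set set \<Rightarrow> 'a set set set \<Rightarrow> bool" where
  "orbit_transversal Grp S R \<longleftrightarrow>
     R \<subseteq> S \<and> (\<forall>T\<in>S. \<exists>!T'. T' \<in> R \<and> T' \<in> orbit Grp T)"

end

theory Submission
  imports Defs
begin

text \<open>
  The principal subgraphs \<open>G\<^sub>i\<close> of a serial superedge meet only in the gates
  \<open>t\<^sub>i = s\<^sub>i\<^sub>+\<^sub>1\<close>, and every gate separates the two sides of the chain.
  Hence a set of edges is a spanning tree of \<open>G\<close> iff its trace on each \<open>G\<^sub>i\<close> is a spanning
  tree of \<open>G\<^sub>i\<close>. As the \<open>G\<^sub>i\<close> are non-serial, no inner vertex of \<open>G\<^sub>i\<close> separates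
  \<open>s\<^sub>i\<close> from \<open>t\<^sub>i\<close>, so the vertices separating \<open>s\<close> from \<open>t\<^sub>j\<close> are exactly
  \<open>s, t\<^sub>1, \<dots>, t\<^sub>j\<close>. An oriented automorphism of \<open>G\<close> preserves these separator sets,
  and comparing their sizes shows that it fixes every gate; therefore it maps each \<open>G\<^sub>i\<close> onto
  itself and restricts to an oriented automorphism of \<open>G\<^sub>i\<close>. Conversely, oriented
  automorphisms of the \<open>G\<^sub>i\<close> glue to one of \<open>G\<close>. So the orbit of a spanning tree of \<open>G\<close>
  is the product of the orbits of its traces, and choosing one representative in each factor
  chooses exactly one tree per orbit.
\<close>

section \<open>Walks and reachability\<close>

lemma walk_nonempty: "walk F xs \<Longrightarrow> xs \<noteq> []"
  by (cases xs) auto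

lemma walk_Cons: "walk F (x # xs) \<longleftrightarrow> xs = [] \<or> {x, hd xs} \<in> F \<and> walk F xs"
  by (cases xs) auto

lemma walk_append:
  "xs \<noteq> [] \<Longrightarrow> ys \<noteq> [] \<Longrightarrow>
   walk F (xs @ ys) \<longleftrightarrow> walk F xs \<and> walk F ys \<and> {last xs, hd ys} \<in> F"
proof (induction xs)
  case (Cons x xs)
  show ?case
  proof (cases "xs = []")
    case True
    then show ?thesis using Cons.prems by (cases ys) auto
  qed (use Cons in \<open>cases xs; auto\<close>)
qed simp

lemma walk_rev: "walk F xs \<Longrightarrow> walk F (rev xs)"
proof (induction xs)
  case (Cons x xs)
  show ?case
  proof (cases "xs = []")
    case False
    with Cons have "walk F (rev xs)" "{x, hd xs} \<in> F" by (auto simp: walk_Cons)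
    with False show ?thesis
      by (subst rev.simps, subst walk_append) (auto simp: last_rev insert_commute)
  qed simp
qed simp

lemma walk_map:
  "walk F xs \<Longrightarrow> (\<forall>x\<in>set xs. \<forall>y\<in>set xs. {x, y} \<in> F \<longrightarrow> {f x, f y} \<in> F') \<Longrightarrow>
   walk F' (map f xs)"
  by (induction F xs rule: walk.induct) auto

lemma walk_mono_on:
  "walk F xs \<Longrightarrow> (\<forall>x\<in>set xs. \<forall>y\<in>set xs. {x, y} \<in> F \<longrightarrow> {x, y} \<in> F') \<Longrightarrow> walk F' xs"
  using walk_map[of F xs id F'] by simp

lemma walk_mono: "walk F xs \<Longrightarrow> F \<subseteq> F' \<Longrightarrow> walk F' xs"
  using walk_mono_on by blast

lemma walk_split:
  assumes "walk F (as @ z # bs)"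
  shows "walk F (as @ [z])" and "walk F (z # bs)"
proof -
  show "walk F (as @ [z])"
    using assms walk_append[of as "z # bs" F] walk_append[of as "[z]" F] by (cases "as = []") simp_all
  show "walk F (z # bs)"
    using assms walk_append[of as "z # bs" F] by (cases "as = []") simp_all
qed

lemma walk_join:
  assumes "walk F xs" "walk F ys" "last xs = hd ys"
  shows "walk F (xs @ tl ys)"
proof (cases "tl ys = []")
  case False
  then obtain y z zs where "ys = y # z # zs"
    by (metis list.collapse walk_nonempty[OF assms(2)])
  with assms walk_nonempty[OF assms(1)] show ?thesis by (subst walk_append) auto
qed (use assms in simp)

lemma walk_vertices_in_edges: "walk F xs \<Longrightarrow> 2 \<le> length xs \<Longrightarrow> set xs \<subseteq> \<Union>F"
proof (induction F xs rule: walk.induct)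
  case (3 F x y xs)
  have "{x, y} \<in> F" using "3.prems"(1) by simp
  moreover have "set (y # xs) \<subseteq> \<Union>F" if "xs \<noteq> []"
    using "3.IH" "3.prems" that by (cases xs) auto
  ultimately show ?case by (cases "xs = []") auto
qed auto

definition reach :: "'a set set \<Rightarrow> 'a set \<Rightarrow> 'a \<Rightarrow> 'a \<Rightarrow> bool" where
  "reach F A x y \<longleftrightarrow> (\<exists>xs. walk F xs \<and> hd xs = x \<and> last xs = y \<and> set xs \<subseteq> A)"

lemma connected_on_iff_reach: "connected_on V F \<longleftrightarrow> (\<forall>x\<in>V. \<forall>y\<in>V. reach F V x y)"
  unfolding connected_on_def reach_def by blast

lemma connected_onD: "connected_on V F \<Longrightarrow> x \<in> V \<Longrightarrow> y \<in> V \<Longrightarrow> reach F V x y"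
  unfolding connected_on_iff_reach by blast

lemma reach_refl: "x \<in> A \<Longrightarrow> reach F A x x"
  unfolding reach_def by (rule exI[of _ "[x]"]) auto

lemma reach_in: "reach F A x y \<Longrightarrow> x \<in> A \<and> y \<in> A"
  unfolding reach_def by (metis hd_in_set last_in_set subsetD walk_nonempty)

lemma reach_sym: "reach F A x y \<Longrightarrow> reach F A y x"
  unfolding reach_def by (metis hd_rev last_rev set_rev walk_rev)

lemma reach_trans: "reach F A x y \<Longrightarrow> reach F A y z \<Longrightarrow> reach F A x z"
  unfolding reach_def
proof (elim exE conjE)
  fix xs ys
  assume xs: "walk F xs" "hd xs = x" "last xs = y" "set xs \<subseteq> A"
    and ys: "walk F ys" "hd ys = y" "last ys = z" "set ys \<subseteq> A"
  have ne: "xs \<noteq> []" "ys \<noteq> []" using xs ys walk_nonempty by auto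
  have "walk F (xs @ tl ys)" using walk_join xs ys by metis
  moreover have "hd (xs @ tl ys) = x" using xs ne by simp
  moreover have "last (xs @ tl ys) = z" using xs ys ne by (cases ys) auto
  moreover have "set (xs @ tl ys) \<subseteq> A" using xs ys ne by (cases ys) auto
  ultimately show "\<exists>zs. walk F zs \<and> hd zs = x \<and> last zs = z \<and> set zs \<subseteq> A" by blast
qed

lemma reach_mono: "reach F A x y \<Longrightarrow> F \<subseteq> F' \<Longrightarrow> A \<subseteq> A' \<Longrightarrow> reach F' A' x y"
  unfolding reach_def using walk_mono by blast

lemma reach_chain:
  "(\<forall>i<n. reach F A (u i) (u (Suc i))) \<Longrightarrow> u 0 \<in> A \<Longrightarrow> reach F A (u 0) (u n)"
  by (induction n) (auto intro: reach_refl reach_trans)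

lemma reach_distinct_walk:
  assumes "reach F A x y"
  shows "\<exists>xs. walk F xs \<and> distinct xs \<and> hd xs = x \<and> last xs = y \<and> set xs \<subseteq> A"
proof -
  obtain xs where "walk F xs" "hd xs = x" "last xs = y" "set xs \<subseteq> A"
    using assms unfolding reach_def by blast
  then show ?thesis
  proof (induction "length xs" arbitrary: xs rule: less_induct)
    case less
    show ?case
    proof (cases "distinct xs")
      case False
      then obtain as z bs cs where xs: "xs = as @ [z] @ bs @ [z] @ cs"
        using not_distinct_decomp by blast
      let ?ys = "as @ z # cs"
      have "walk F (as @ [z])" "walk F (z # cs)"
        using walk_split[of F as z "bs @ [z] @ cs"] walk_split[of F "as @ [z] @ bs" z cs]
          less.prems(1) unfolding xs by auto
      then have "walk F ?ys" using walk_join[of F "as @ [z]" "z # cs"] by simp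
      moreover have "hd ?ys = x" using less.prems(2) xs by (cases as) auto
      moreover have "last ?ys = y" using less.prems(3) xs by (cases cs) auto
      moreover have "set ?ys \<subseteq> A" using less.prems(4) xs by auto
      moreover have "length ?ys < length xs" using xs by simp
      ultimately show ?thesis using less.hyps by blast
    qed (use less.prems in blast)
  qed
qed

definition sole_exit :: "'a set set \<Rightarrow> 'a set \<Rightarrow> 'a \<Rightarrow> bool" where
  "sole_exit F L c \<longleftrightarrow> (\<forall>x y. {x, y} \<in> F \<longrightarrow> x \<in> L \<longrightarrow> y \<notin> L \<longrightarrow> x = c)"

lemma sole_exit_mono: "sole_exit F L c \<Longrightarrow> F' \<subseteq> F \<Longrightarrow> sole_exit F' L c"
  unfolding sole_exit_def by blast

lemma walk_leaves_through_sole_exit: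
  "walk F xs \<Longrightarrow> hd xs \<in> L \<Longrightarrow> last xs \<notin> L \<Longrightarrow> sole_exit F L c \<Longrightarrow> c \<in> set xs"
proof (induction F xs rule: walk.induct)
  case (3 F x y xs)
  then show ?case unfolding sole_exit_def by (cases "y \<in> L") auto
qed auto

lemma distinct_walk_avoids_behind_sole_exit:
  assumes w: "walk F xs" and d: "distinct xs"
    and h: "hd xs \<notin> L - {c}" and l: "last xs \<notin> L - {c}"
    and exit: "sole_exit F L c"
  shows "set xs \<inter> L \<subseteq> {c}"
proof
  fix z assume z: "z \<in> set xs \<inter> L"
  show "z \<in> {c}"
  proof (rule ccontr)
    assume zc: "z \<notin> {c}"
    obtain as bs where xs: "xs = as @ z # bs" using z split_list by fastforce
    have wa: "walk F (as @ [z])" and wb: "walk F (z # bs)"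
      using walk_split[of F as z bs] w xs by auto
    have "c \<in> set as"
    proof (cases "as = [] \<or> hd xs = c")
      case False
      then have "c \<in> set (rev (as @ [z]))"
        using walk_leaves_through_sole_exit[OF walk_rev[OF wa] _ _ exit] z h xs
        by (auto simp: last_rev hd_rev)
      then show ?thesis using zc by auto
    qed (use h xs z zc in \<open>cases as; auto\<close>)
    moreover have "c \<in> set bs"
    proof (cases "bs = [] \<or> last xs = c")
      case False
      then have "c \<in> set (z # bs)"
        using walk_leaves_through_sole_exit[OF wb _ _ exit] z l xs by auto
      then show ?thesis using zc by auto
    qed (use l xs z zc in \<open>cases bs rule: rev_cases; auto\<close>)
    ultimately show False using d xs by auto
  qed
qed

lemma acyclic_graph_mono: "acyclic_graph F \<Longrightarrow> F' \<subseteq> F \<Longrightarrow> acyclic_graph F'"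
  unfolding acyclic_graph_def is_cycle_def using walk_mono by blast

lemma cycle_rotate1: "is_cycle F xs \<Longrightarrow> is_cycle F (rotate1 xs)"
proof -
  assume c: "is_cycle F xs"
  then obtain x ys where xs: "xs = x # ys" and ne: "ys \<noteq> []"
    unfolding is_cycle_def by (cases xs; cases "tl xs") auto
  have "walk F ys" "{x, hd ys} \<in> F" "{last ys, x} \<in> F"
    using c ne unfolding xs is_cycle_def by (auto simp: walk_Cons)
  then have "walk F (ys @ [x])" using ne by (subst walk_append) auto
  then show ?thesis using c ne \<open>{x, hd ys} \<in> F\<close> unfolding xs is_cycle_def by (auto simp: insert_commute)
qed

lemma cycle_rotate: "is_cycle F xs \<Longrightarrow> is_cycle F (rotate n xs)"
  by (induction n) (auto simp: cycle_rotate1)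

lemma cycle_avoids_behind_sole_exit:
  assumes cy: "is_cycle F xs" and z: "z \<in> set xs" "z \<notin> L" and exit: "sole_exit F L c"
  shows "set xs \<inter> L \<subseteq> {c}"
proof -
  obtain q where q: "q < length xs" "xs ! q = z" using z by (metis in_set_conv_nth)
  let ?ys = "rotate q xs"
  have cy': "is_cycle F ?ys" using cycle_rotate cy by blast
  have hd: "hd ?ys = z" using q hd_rotate_conv_nth[of xs q] by (cases xs) auto
  \<comment> \<open>the closing edge of the rotated cycle ends at \<open>z \<notin> L\<close>\<close>
  have "last ?ys \<notin> L - {c}"
    using cy' exit hd z unfolding is_cycle_def sole_exit_def by blast
  then have "set ?ys \<inter> L \<subseteq> {c}"
    using distinct_walk_avoids_behind_sole_exit[OF _ _ _ _ exit] cy' hd z unfolding is_cycle_def by blast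
  then show ?thesis by simp
qed

definition automorphism :: "'a set \<Rightarrow> 'a set set \<Rightarrow> ('a \<Rightarrow> 'a) \<Rightarrow> bool" where
  "automorphism V F \<sigma> \<longleftrightarrow> bij_betw \<sigma> V V \<and> (\<forall>x\<in>V. \<forall>y\<in>V. {x, y} \<in> F \<longleftrightarrow> {\<sigma> x, \<sigma> y} \<in> F)"

lemma aut_or_iff: "\<sigma> \<in> aut_or V F u v \<longleftrightarrow> automorphism V F \<sigma> \<and> \<sigma> u = u \<and> \<sigma> v = v"
  unfolding aut_or_def automorphism_def by blast

lemma automorphism_in: "automorphism V F \<sigma> \<Longrightarrow> x \<in> V \<Longrightarrow> \<sigma> x \<in> V"
  unfolding automorphism_def using bij_betwE by blast

lemma automorphism_inj: "automorphism V F \<sigma> \<Longrightarrow> x \<in> V \<Longrightarrow> y \<in> V \<Longrightarrow> \<sigma> x = \<sigma> y \<longleftrightarrow> x = y"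
  unfolding automorphism_def bij_betw_def inj_on_def by blast

lemma automorphism_surj: "automorphism V F \<sigma> \<Longrightarrow> y \<in> V \<Longrightarrow> \<exists>x\<in>V. \<sigma> x = y"
  unfolding automorphism_def bij_betw_def by (metis imageE)

lemma automorphism_edge_iff:
  "automorphism V F \<sigma> \<Longrightarrow> x \<in> V \<Longrightarrow> y \<in> V \<Longrightarrow> {\<sigma> x, \<sigma> y} \<in> F \<longleftrightarrow> {x, y} \<in> F"
  unfolding automorphism_def by blast

lemma automorphism_inv:
  assumes a: "automorphism V F \<sigma>" shows "automorphism V F (inv_into V \<sigma>)"
proof -
  have b: "bij_betw \<sigma> V V" using a unfolding automorphism_def by blast
  have b': "bij_betw (inv_into V \<sigma>) V V" using bij_betw_inv_into[OF b] .
  have "{x, y} \<in> F \<longleftrightarrow> {inv_into V \<sigma> x, inv_into V \<sigma> y} \<in> F" if "x \<in> V" "y \<in> V" for x y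
    using automorphism_edge_iff[OF a, of "inv_into V \<sigma> x" "inv_into V \<sigma> y"] b b' that
    by (simp add: bij_betw_def bij_betwE f_inv_into_f)
  then show ?thesis using b' unfolding automorphism_def by blast
qed

lemma automorphism_image_Diff:
  assumes a: "automorphism V F \<sigma>" and c: "c \<in> V"
  shows "\<sigma> ` (V - {c}) = V - {\<sigma> c}"
proof -
  have "inj_on \<sigma> V" "\<sigma> ` V = V" using a unfolding automorphism_def bij_betw_def by auto
  then show ?thesis using c inj_on_image_set_diff[of \<sigma> V V "{c}"] by auto
qed

lemma reach_automorphism:
  assumes a: "automorphism V F \<sigma>" and B: "B \<subseteq> V" and r: "reach F B x y"
  shows "reach F (\<sigma> ` B) (\<sigma> x) (\<sigma> y)"
proof -
  obtain xs where xs: "walk F xs" "hd xs = x" "last xs = y" "set xs \<subseteq> B"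
    using r unfolding reach_def by blast
  have "walk F (map \<sigma> xs)"
    using walk_map[OF xs(1)] automorphism_edge_iff[OF a] xs(4) B by blast
  moreover have "hd (map \<sigma> xs) = \<sigma> x" "last (map \<sigma> xs) = \<sigma> y"
    using walk_nonempty[OF xs(1)] xs by (auto simp: hd_map last_map)
  moreover have "set (map \<sigma> xs) \<subseteq> \<sigma> ` B" using xs by auto
  ultimately show ?thesis unfolding reach_def by blast
qed

lemma reach_automorphism_iff:
  assumes a: "automorphism V F \<sigma>" and B: "B \<subseteq> V" and x: "x \<in> V" and y: "y \<in> V"
  shows "reach F (\<sigma> ` B) (\<sigma> x) (\<sigma> y) \<longleftrightarrow> reach F B x y"
proof
  assume r: "reach F (\<sigma> ` B) (\<sigma> x) (\<sigma> y)"
  have b: "bij_betw \<sigma> V V" using a unfolding automorphism_def by blast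
  have "\<sigma> ` B \<subseteq> V" using b B bij_betw_imp_surj_on by blast
  from reach_automorphism[OF automorphism_inv[OF a] this r]
  show "reach F B x y"
    using b B x y by (simp add: bij_betw_def inv_into_image_cancel inv_into_f_f)
qed (rule reach_automorphism[OF a B])

lemma mem_orbit_iff: "X \<in> orbit G T \<longleftrightarrow> (\<exists>\<sigma>\<in>G. X = act \<sigma> T)"
  unfolding orbit_def by blast

section \<open>Serial composition\<close>

definition two_terminal_graph :: "'a set \<Rightarrow> 'a set set \<Rightarrow> 'a \<Rightarrow> 'a \<Rightarrow> bool" where
  "two_terminal_graph V E s t \<longleftrightarrow>
     s \<in> V \<and> t \<in> V \<and> s \<noteq> t \<and> (\<forall>e\<in>E. \<exists>x y. e = {x, y} \<and> x \<noteq> y \<and> x \<in> V \<and> y \<in> V)"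

locale serial_composition =
  fixes k :: nat and Vs :: "nat \<Rightarrow> 'a set" and Es :: "nat \<Rightarrow> 'a set set"
    and ss ts :: "nat \<Rightarrow> 'a" and s t :: 'a
  assumes two_le_k: "2 \<le> k"
    and two_terminal_component: "\<And>i. i < k \<Longrightarrow> two_terminal_graph (Vs i) (Es i) (ss i) (ts i)"
    and conds: "serial_conds k Vs ss ts s t"
begin

abbreviation V where "V \<equiv> \<Union>i<k. Vs i"
abbreviation E where "E \<equiv> \<Union>i<k. Es i"

lemma ss_0: "ss 0 = s"
  and ts_last: "ts (k - 1) = t"
  and ts_eq_ss_Suc: "i + 1 < k \<Longrightarrow> ts i = ss (i + 1)"
  and Vs_Int_Suc: "i + 1 < k \<Longrightarrow> Vs i \<inter> Vs (i + 1) = {ss (i + 1)}"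
  and Vs_Int_far: "j < k \<Longrightarrow> i + 2 \<le> j \<Longrightarrow> Vs i \<inter> Vs j = {}"
  using conds unfolding serial_conds_def by auto

lemma ss_in: "i < k \<Longrightarrow> ss i \<in> Vs i"
  and ts_in: "i < k \<Longrightarrow> ts i \<in> Vs i"
  and ss_ne_ts: "i < k \<Longrightarrow> ss i \<noteq> ts i"
  and component_edge: "i < k \<Longrightarrow> e \<in> Es i \<Longrightarrow> \<exists>x y. e = {x, y} \<and> x \<noteq> y \<and> x \<in> Vs i \<and> y \<in> Vs i"
  using two_terminal_component unfolding two_terminal_graph_def by blast+

lemma ss_eq_ts_pred: "0 < i \<Longrightarrow> i < k \<Longrightarrow> ss i = ts (i - 1)"
  using ts_eq_ss_Suc[of "i - 1"] by simp

lemma ts_in_Suc: "i + 1 < k \<Longrightarrow> ts i \<in> Vs (i + 1)"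
  using ts_eq_ss_Suc ss_in by simp

lemma Vs_Int_gate:
  assumes "i < j" "j < k" "x \<in> Vs i" "x \<in> Vs j"
  shows "j = i + 1 \<and> x = ts i"
proof (cases "j = i + 1")
  case True then show ?thesis using Vs_Int_Suc[of i] assms ts_eq_ss_Suc[of i] by auto
next
  case False then show ?thesis using Vs_Int_far[of j i] assms by auto
qed

lemma Vs_Int_ends:
  assumes "i < k" "j < k" "i \<noteq> j" "x \<in> Vs i" "x \<in> Vs j"
  shows "x = ss i \<or> x = ts i"
proof (cases "i < j")
  case False
  then show ?thesis using Vs_Int_gate[of j i x] assms ts_eq_ss_Suc[of j] by auto
qed (use Vs_Int_gate[of i j x] assms in auto)

lemma E_edgeE:
  assumes "{x, y} \<in> E"
  obtains i where "i < k" "x \<in> Vs i" "y \<in> Vs i" "x \<noteq> y" "{x, y} \<in> Es i"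
proof -
  obtain i where i: "i < k" "{x, y} \<in> Es i" using assms by auto
  then obtain a b where "{x, y} = {a, b}" "a \<noteq> b" "a \<in> Vs i" "b \<in> Vs i"
    using component_edge by blast
  then show ?thesis using that[OF i(1) _ _ _ i(2)] by (auto simp: doubleton_eq_iff)
qed

lemma E_iff_component_edge:
  assumes i: "i < k" and xy: "x \<in> Vs i" "y \<in> Vs i"
  shows "{x, y} \<in> E \<longleftrightarrow> {x, y} \<in> Es i"
proof
  assume "{x, y} \<in> E"
  then obtain m where m: "m < k" "x \<in> Vs m" "y \<in> Vs m" "x \<noteq> y" "{x, y} \<in> Es m"
    by (rule E_edgeE)
  \<comment> \<open>two components share at most one vertex\<close>
  have "m = i"
  proof (rule ccontr)
    assume "m \<noteq> i"
    then consider "m < i" | "i < m" by linarith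
    then show False
      using Vs_Int_gate[of m i x] Vs_Int_gate[of m i y] Vs_Int_gate[of i m x] Vs_Int_gate[of i m y] m i xy
      by cases auto
  qed
  then show "{x, y} \<in> Es i" using m by simp
qed (use i in auto)

lemma Es_disjoint:
  assumes i: "i < k" and j: "j < k" and "i \<noteq> j" shows "Es i \<inter> Es j = {}"
proof (rule ccontr)
  assume "Es i \<inter> Es j \<noteq> {}"
  then obtain e where e: "e \<in> Es i" "e \<in> Es j" by blast
  then obtain x y where xy: "e = {x, y}" "x \<noteq> y" "x \<in> Vs i" "y \<in> Vs i"
    using component_edge[OF i] by blast
  obtain a b where "e = {a, b}" "a \<in> Vs j" "b \<in> Vs j"
    using component_edge[OF j e(2)] by blast
  then have "x \<in> Vs j" "y \<in> Vs j" using xy(1) by (auto simp: doubleton_eq_iff)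
  moreover consider "i < j" | "j < i" using \<open>i \<noteq> j\<close> by linarith
  ultimately show False
    using Vs_Int_gate[of i j x] Vs_Int_gate[of i j y] Vs_Int_gate[of j i x] Vs_Int_gate[of j i y] i j xy
    by cases auto
qed

lemma Union_E_subset: "\<Union>E \<subseteq> V"
proof
  fix x assume "x \<in> \<Union>E"
  then obtain i e where ie: "i < k" "e \<in> Es i" "x \<in> e" by blast
  then obtain a b where "e = {a, b}" "a \<in> Vs i" "b \<in> Vs i" using component_edge by blast
  then show "x \<in> V" using ie by auto
qed

lemma s_in: "s \<in> Vs 0" and t_in: "t \<in> Vs (k - 1)"
  using ss_in[of 0] ss_0 ts_in[of "k - 1"] ts_last two_le_k by auto

lemma s_ne_t: "s \<noteq> t"
proof
  assume "s = t"
  then have "s = ts 0" using Vs_Int_gate[of 0 "k - 1" s] s_in t_in two_le_k by auto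
  then show False using ss_ne_ts[of 0] ss_0 two_le_k by auto
qed

lemma two_terminal_graph_union: "two_terminal_graph V E s t"
proof -
  have "0 < k" "k - 1 < k" using two_le_k by auto
  then have "s \<in> V" "t \<in> V" using s_in t_in by blast+
  moreover have "\<exists>x y. e = {x, y} \<and> x \<noteq> y \<and> x \<in> V \<and> y \<in> V" if "e \<in> E" for e
  proof -
    obtain i where i: "i < k" "e \<in> Es i" using \<open>e \<in> E\<close> by blast
    then obtain x y where "e = {x, y}" "x \<noteq> y" "x \<in> Vs i" "y \<in> Vs i" using component_edge by blast
    then show ?thesis using i(1) by blast
  qed
  ultimately show ?thesis unfolding two_terminal_graph_def using s_ne_t by blast
qed

definition prefix_vertices :: "nat \<Rightarrow> 'a set" where
  "prefix_vertices j = (\<Union>i\<le>j. Vs i)"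

definition suffix_vertices :: "nat \<Rightarrow> 'a set" where
  "suffix_vertices j = (\<Union>i\<in>{j..<k}. Vs i)"

lemma mem_prefix_vertices: "x \<in> prefix_vertices j \<longleftrightarrow> (\<exists>i\<le>j. x \<in> Vs i)"
  unfolding prefix_vertices_def by auto

lemma mem_suffix_vertices: "x \<in> suffix_vertices j \<longleftrightarrow> (\<exists>i. j \<le> i \<and> i < k \<and> x \<in> Vs i)"
  unfolding suffix_vertices_def by auto

lemma prefix_vertices_last: "prefix_vertices (k - 1) = V"
proof -
  have "{..k - 1} = {..<k}" using two_le_k by auto
  then show ?thesis unfolding prefix_vertices_def by simp
qed

lemma s_in_prefix: "s \<in> prefix_vertices j"
  using s_in by (auto simp: mem_prefix_vertices)

lemma ts_in_prefix: "j < k \<Longrightarrow> ts j \<in> prefix_vertices j"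
  using ts_in by (auto simp: mem_prefix_vertices)

lemma ts_notin_prefix: assumes "i < j" "j < k" shows "ts j \<notin> prefix_vertices i"
proof
  assume "ts j \<in> prefix_vertices i"
  then obtain m where m: "m \<le> i" "ts j \<in> Vs m" by (auto simp: mem_prefix_vertices)
  have g: "j = m + 1 \<and> ts j = ts m" using Vs_Int_gate[of m j "ts j"] m assms ts_in by auto
  show False
  proof (cases "j + 1 < k")
    case True
    then show False using Vs_Int_gate[of m "j + 1" "ts j"] m assms ts_in_Suc by auto
  next
    case False
    then have "j = k - 1" using assms by simp
    then show False using g ts_eq_ss_Suc[of m] ss_ne_ts[of j] assms by auto
  qed
qed

lemma ts_inj: assumes "i < k" "j < k" "ts i = ts j" shows "i = j"
proof (rule ccontr)
  assume "i \<noteq> j"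
  then have "i < j \<or> j < i" by auto
  then show False using ts_notin_prefix ts_in_prefix assms by metis
qed

lemma ts_ne_s: assumes "j < k" shows "ts j \<noteq> s"
proof (cases "j = 0")
  case True then show ?thesis using ss_ne_ts[of 0] ss_0 assms by auto
next
  case False then show ?thesis using ts_notin_prefix[of 0 j] s_in_prefix[of 0] assms by auto
qed

lemma sole_exit_prefix:
  assumes "j + 1 < k" shows "sole_exit E (prefix_vertices j) (ts j)"
  unfolding sole_exit_def
proof (intro allI impI)
  fix x y assume xy: "{x, y} \<in> E" "x \<in> prefix_vertices j" "y \<notin> prefix_vertices j"
  obtain m where m: "m < k" "x \<in> Vs m" "y \<in> Vs m" using xy(1) by (rule E_edgeE)
  have "j < m" using m xy(3) unfolding mem_prefix_vertices by (meson not_less)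
  obtain i where i: "i \<le> j" "x \<in> Vs i" using xy(2) by (auto simp: mem_prefix_vertices)
  have "m = i + 1 \<and> x = ts i" using Vs_Int_gate[of i m x] i m \<open>j < m\<close> by auto
  moreover from this have "i = j" using i \<open>j < m\<close> by auto
  ultimately show "x = ts j" by simp
qed

lemma sole_exit_suffix:
  assumes "i + 1 < k" shows "sole_exit E (suffix_vertices (i + 1)) (ts i)"
  unfolding sole_exit_def
proof (intro allI impI)
  fix x y assume xy: "{x, y} \<in> E" "x \<in> suffix_vertices (i + 1)" "y \<notin> suffix_vertices (i + 1)"
  obtain m where m: "m < k" "x \<in> Vs m" "y \<in> Vs m" using xy(1) by (rule E_edgeE)
  have "m \<le> i" using m xy(3) by (auto simp: mem_suffix_vertices)
  obtain m' where m': "i + 1 \<le> m'" "m' < k" "x \<in> Vs m'" using xy(2) by (auto simp: mem_suffix_vertices)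
  have "m' = m + 1 \<and> x = ts m" using Vs_Int_gate[of m m' x] m m' \<open>m \<le> i\<close> by auto
  then show "x = ts i" using m' \<open>m \<le> i\<close> by auto
qed

lemma Vs_Int_prefix: assumes "0 < i" "i < k" "x \<in> Vs i" "x \<in> prefix_vertices (i - 1)"
  shows "x = ts (i - 1)"
proof -
  obtain m where m: "m \<le> i - 1" "x \<in> Vs m" using assms by (auto simp: mem_prefix_vertices)
  then have "m < i" using assms by simp
  then show ?thesis using Vs_Int_gate[of m i x] assms m by auto
qed

lemma Vs_Int_suffix: assumes "i + 1 < k" "x \<in> Vs i" "x \<in> suffix_vertices (i + 1)"
  shows "x = ts i"
proof -
  obtain m where "i + 1 \<le> m" "m < k" "x \<in> Vs m" using assms by (auto simp: mem_suffix_vertices)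
  then show ?thesis using Vs_Int_gate[of i m x] assms by auto
qed

text \<open>\<open>L\<close> is the part of the chain before the \<open>i\<close>-th component, left only through \<open>ts (i - 1)\<close>,
  or the part after it, left only through \<open>ts i\<close>.\<close>

lemma outside_component_behind_gate:
  assumes "x \<in> V" "i < k" "x \<notin> Vs i"
  obtains L c where "x \<in> L" "x \<noteq> c" "sole_exit E L c" "Vs i \<inter> L \<subseteq> {c}"
proof -
  obtain m where m: "m < k" "x \<in> Vs m" using assms by auto
  have "m \<noteq> i" using m assms by auto
  then consider "m < i" | "i < m" by linarith
  then show ?thesis
  proof cases
    case 1
    have "x \<in> prefix_vertices (i - 1)" using m 1 unfolding mem_prefix_vertices by (intro exI[of _ m]) auto
    moreover have "x \<noteq> ts (i - 1)" using assms ss_eq_ts_pred[of i] ss_in[of i] 1 by auto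
    moreover have "Vs i \<inter> prefix_vertices (i - 1) \<subseteq> {ts (i - 1)}" using Vs_Int_prefix[of i] 1 assms(2) by auto
    ultimately show ?thesis using that sole_exit_prefix[of "i - 1"] 1 assms by simp
  next
    case 2
    have "x \<in> suffix_vertices (i + 1)" using m 2 unfolding mem_suffix_vertices by (intro exI[of _ m]) auto
    moreover have "x \<noteq> ts i" using assms ts_in by auto
    moreover have "Vs i \<inter> suffix_vertices (i + 1) \<subseteq> {ts i}" using Vs_Int_suffix[of i] 2 m by auto
    ultimately show ?thesis using that sole_exit_suffix[of i] 2 m by simp
  qed
qed

lemma reach_ss_chain:
  assumes "\<forall>m<i. reach F A (ss m) (ts m)" "i < k" "s \<in> A"
  shows "reach F A s (ss i)"
proof -
  have "\<forall>m<i. reach F A (ss m) (ss (Suc m))"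
    using assms(1,2) ts_eq_ss_Suc by simp
  then show ?thesis using reach_chain[of i F A ss] ss_0 assms by simp
qed

lemma reach_prefix_avoiding_ts:
  assumes ends: "\<And>m. m < k \<Longrightarrow> reach (Es m) (Vs m) (ss m) (ts m)"
    and avoid: "\<And>m v. m < k \<Longrightarrow> v \<in> Vs m \<Longrightarrow> v \<noteq> ts m \<Longrightarrow> reach (Es m) (Vs m - {ts m}) (ss m) v"
    and j: "j < k" and v: "v \<in> prefix_vertices j" "v \<noteq> ts j"
  shows "reach E (V - {ts j}) s v"
proof -
  obtain i where i: "i \<le> j" "v \<in> Vs i" "v \<noteq> ts i"
  proof -
    obtain i where i: "i \<le> j" "v \<in> Vs i" using v(1) by (auto simp: mem_prefix_vertices)
    show ?thesis
    proof (cases "v = ts i")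
      case True
      \<comment> \<open>then \<open>v\<close> is also the source of the next component\<close>
      then have "i < j" using i v(2) by (cases "i = j") auto
      then show ?thesis
        using that[of "i + 1"] True ts_in_Suc[of i] ts_eq_ss_Suc[of i] ss_ne_ts[of "i + 1"] j by simp
    qed (rule that[OF i])
  qed
  have ik: "i < k" using i j by simp
  have notin: "ts j \<notin> Vs m" if "m < j" for m
    using ts_notin_prefix[OF that j] unfolding mem_prefix_vertices by auto
  have "\<forall>m<i. reach E (V - {ts j}) (ss m) (ts m)"
  proof (intro allI impI)
    fix m assume "m < i"
    have mk: "m < k" using \<open>m < i\<close> ik by simp
    then have "Vs m \<subseteq> V - {ts j}" using \<open>m < i\<close> i notin[of m] by auto
    then show "reach E (V - {ts j}) (ss m) (ts m)" using mk by (intro reach_mono[OF ends]) auto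
  qed
  moreover have "s \<in> V - {ts j}" using ts_ne_s[OF j] s_in two_le_k by auto
  ultimately have "reach E (V - {ts j}) s (ss i)" using reach_ss_chain ik by simp
  moreover have "reach E (V - {ts j}) (ss i) v"
  proof -
    have "Vs i - {ts i} \<subseteq> V - {ts j}" using notin[of i] i ik by (cases "i = j") auto
    moreover have "Es i \<subseteq> E" using ik by blast
    ultimately show ?thesis using reach_mono[OF avoid[OF ik i(2,3)]] by blast
  qed
  ultimately show ?thesis by (rule reach_trans)
qed

lemma reach_avoiding_ts_in_prefix:
  assumes j: "j < k" and r: "reach E (V - {ts j}) s v"
  shows "v \<in> prefix_vertices j"
proof (cases "j + 1 < k")
  case True
  show ?thesis
  proof (rule ccontr)
    assume "v \<notin> prefix_vertices j"
    moreover obtain xs where xs: "walk E xs" "hd xs = s" "last xs = v" "set xs \<subseteq> V - {ts j}"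
      using r unfolding reach_def by blast
    ultimately have "ts j \<in> set xs"
      using walk_leaves_through_sole_exit[OF xs(1) _ _ sole_exit_prefix[OF True]] s_in_prefix by simp
    then show False using xs(4) by blast
  qed
next
  case False
  then have "j = k - 1" using j by simp
  then show ?thesis using reach_in[OF r] prefix_vertices_last by simp
qed

lemma Vs_iff_prefix:
  assumes i: "i < k"
  shows "v \<in> Vs i \<longleftrightarrow> v \<in> prefix_vertices i \<and> (i = 0 \<or> v \<notin> prefix_vertices (i - 1) \<or> v = ts (i - 1))"
proof
  assume "v \<in> Vs i"
  moreover have "v = ts (i - 1)" if "0 < i" "v \<in> prefix_vertices (i - 1)"
    using Vs_Int_prefix[OF that(1) i \<open>v \<in> Vs i\<close> that(2)] .
  ultimately show "v \<in> prefix_vertices i \<and> (i = 0 \<or> v \<notin> prefix_vertices (i - 1) \<or> v = ts (i - 1))"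
    unfolding mem_prefix_vertices by blast
next
  assume h: "v \<in> prefix_vertices i \<and> (i = 0 \<or> v \<notin> prefix_vertices (i - 1) \<or> v = ts (i - 1))"
  then obtain m where m: "m \<le> i" "v \<in> Vs m" unfolding mem_prefix_vertices by blast
  show "v \<in> Vs i"
  proof (cases "m = i")
    case False
    then have "m < i" using m by simp
    then have "v \<in> prefix_vertices (i - 1)" unfolding mem_prefix_vertices using m by (intro exI[of _ m]) auto
    then have "v = ts (i - 1)" using h \<open>m < i\<close> by auto
    then show ?thesis using ss_eq_ts_pred[of i] ss_in[OF i] \<open>m < i\<close> i by simp
  qed (use m in simp)
qed

section \<open>Spanning trees of a serial composition\<close>

lemma distinct_walk_in_component:
  assumes w: "walk F xs" "distinct xs" and FE: "F \<subseteq> E" and xsV: "set xs \<subseteq> V"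
    and i: "i < k" and ends: "hd xs \<in> Vs i" "last xs \<in> Vs i"
  shows "set xs \<subseteq> Vs i"
proof
  fix z assume z: "z \<in> set xs"
  show "z \<in> Vs i"
  proof (rule ccontr)
    assume "z \<notin> Vs i"
    moreover have "z \<in> V" using z xsV by blast
    ultimately obtain L c where L: "z \<in> L" "z \<noteq> c" "sole_exit E L c" "Vs i \<inter> L \<subseteq> {c}"
      using outside_component_behind_gate i by metis
    have "set xs \<inter> L \<subseteq> {c}"
      by (rule distinct_walk_avoids_behind_sole_exit[OF w _ _ sole_exit_mono[OF L(3) FE]])
        (use ends L(4) in auto)
    then show False using z L(1,2) by blast
  qed
qed

lemma cycle_in_component:
  assumes cy: "is_cycle F xs" and FE: "F \<subseteq> E" and i: "i < k"
    and ab: "a \<in> set xs" "b \<in> set xs" "a \<noteq> b" "a \<in> Vs i" "b \<in> Vs i"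
  shows "set xs \<subseteq> Vs i"
proof
  have "set xs \<subseteq> \<Union>F" using cy walk_vertices_in_edges[of F xs] unfolding is_cycle_def by simp
  then have xsV: "set xs \<subseteq> V" using FE Union_E_subset by blast
  fix z assume z: "z \<in> set xs"
  show "z \<in> Vs i"
  proof (rule ccontr)
    assume "z \<notin> Vs i"
    moreover have "z \<in> V" using z xsV by blast
    ultimately obtain L c where L: "z \<in> L" "z \<noteq> c" "sole_exit E L c" "Vs i \<inter> L \<subseteq> {c}"
      using outside_component_behind_gate i by metis
    \<comment> \<open>at most one of the two distinct vertices \<open>a\<close>, \<open>b\<close> of \<open>Vs i\<close> is the gate \<open>c\<close>\<close>
    obtain w where w: "w \<in> set xs" "w \<notin> L" using ab L(4) by blast
    have "set xs \<inter> L \<subseteq> {c}"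
      by (rule cycle_avoids_behind_sole_exit[OF cy w sole_exit_mono[OF L(3) FE]])
    then show False using z L(1,2) by blast
  qed
qed

lemma walk_component_edges:
  assumes w: "walk F xs" and FE: "F \<subseteq> E" and i: "i < k" and xs: "set xs \<subseteq> Vs i"
  shows "walk (F \<inter> Es i) xs"
proof (rule walk_mono_on[OF w], intro ballI impI)
  fix x y assume "x \<in> set xs" "y \<in> set xs" "{x, y} \<in> F"
  then show "{x, y} \<in> F \<inter> Es i" using E_iff_component_edge[OF i, of x y] FE xs by auto
qed

lemma spanning_tree_component:
  assumes T: "T \<in> spanning_trees V E" and i: "i < k"
  shows "T \<inter> Es i \<in> spanning_trees (Vs i) (Es i)"
proof -
  have TE: "T \<subseteq> E" and cT: "connected_on V T" and aT: "acyclic_graph T"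
    using T unfolding spanning_trees_def by auto
  have "acyclic_graph (T \<inter> Es i)" using acyclic_graph_mono[OF aT] by blast
  moreover have "reach (T \<inter> Es i) (Vs i) x y" if xy: "x \<in> Vs i" "y \<in> Vs i" for x y
  proof -
    have "x \<in> V" "y \<in> V" using xy i by auto
    then have "reach T V x y" by (rule connected_onD[OF cT])
    then obtain xs where xs: "walk T xs" "distinct xs" "hd xs = x" "last xs = y" "set xs \<subseteq> V"
      using reach_distinct_walk[of T V x y] by blast
    have sub: "set xs \<subseteq> Vs i" using distinct_walk_in_component[OF xs(1,2) TE xs(5) i] xy xs(3,4) by simp
    show ?thesis
      unfolding reach_def using walk_component_edges[OF xs(1) TE i sub] xs(3,4) sub by blast
  qed
  ultimately show ?thesis unfolding spanning_trees_def connected_on_iff_reach by blast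
qed

lemma connected_on_glue:
  assumes comps: "\<And>i. i < k \<Longrightarrow> connected_on (Vs i) (T \<inter> Es i)"
  shows "connected_on V T"
proof -
  have conn: "reach T V x y" if i: "i < k" and xy: "x \<in> Vs i" "y \<in> Vs i" for i x y
  proof -
    have "reach (T \<inter> Es i) (Vs i) x y" using connected_onD[OF comps[OF i] xy] .
    then show ?thesis by (rule reach_mono) (use i in auto)
  qed
  have from_s: "reach T V s x" if x: "x \<in> V" for x
  proof -
    obtain i where i: "i < k" "x \<in> Vs i" using x by blast
    have "\<forall>m<i. reach T V (ss m) (ts m)"
      using conn[OF _ ss_in ts_in] i(1) by (meson order.strict_trans)
    moreover have "s \<in> V" using s_in two_le_k by auto
    ultimately have "reach T V s (ss i)" using reach_ss_chain i(1) by blast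
    moreover have "reach T V (ss i) x" using conn i ss_in by simp
    ultimately show ?thesis by (rule reach_trans)
  qed
  show ?thesis
    unfolding connected_on_iff_reach using reach_trans[OF reach_sym[OF from_s] from_s] by blast
qed

lemma acyclic_graph_glue:
  assumes TE: "T \<subseteq> E" and comps: "\<And>i. i < k \<Longrightarrow> acyclic_graph (T \<inter> Es i)"
  shows "acyclic_graph T"
  unfolding acyclic_graph_def
proof
  assume "\<exists>xs. is_cycle T xs"
  then obtain xs where cy: "is_cycle T xs" by blast
  then obtain a b rest where xs: "xs = a # b # rest"
    unfolding is_cycle_def by (cases xs; cases "tl xs") auto
  have "{a, b} \<in> E" using cy xs TE unfolding is_cycle_def by auto
  then obtain i where i: "i < k" "a \<in> Vs i" "b \<in> Vs i" "a \<noteq> b" by (rule E_edgeE)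
  have sub: "set xs \<subseteq> Vs i" using cycle_in_component[OF cy TE i(1) _ _ i(4) i(2,3)] xs by simp
  have "last xs \<in> Vs i" "hd xs \<in> Vs i" using sub xs by auto
  moreover have "{last xs, hd xs} \<in> E" using cy TE unfolding is_cycle_def by auto
  ultimately have "{last xs, hd xs} \<in> Es i" using E_iff_component_edge[OF i(1)] by blast
  moreover have "walk (T \<inter> Es i) xs"
    using cy walk_component_edges[OF _ TE i(1) sub] unfolding is_cycle_def by simp
  ultimately have "is_cycle (T \<inter> Es i) xs" using cy unfolding is_cycle_def by simp
  then show False using comps[OF i(1)] unfolding acyclic_graph_def by blast
qed

lemma spanning_tree_glue:
  assumes TE: "T \<subseteq> E" and comps: "\<And>i. i < k \<Longrightarrow> T \<inter> Es i \<in> spanning_trees (Vs i) (Es i)"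
  shows "T \<in> spanning_trees V E"
  using TE connected_on_glue[of T] acyclic_graph_glue[OF TE] comps
  unfolding spanning_trees_def by blast

lemma Union_Int_Es:
  assumes U: "\<And>i. i < k \<Longrightarrow> U i \<subseteq> Es i" and j: "j < k"
  shows "(\<Union>i<k. U i) \<inter> Es j = U j"
proof
  show "(\<Union>i<k. U i) \<inter> Es j \<subseteq> U j"
  proof
    fix e assume "e \<in> (\<Union>i<k. U i) \<inter> Es j"
    then obtain i where "i < k" "e \<in> U i" "e \<in> Es j" by auto
    then show "e \<in> U j" using U Es_disjoint[of i j] j by (cases "i = j") auto
  qed
qed (use U j in auto)

lemma Union_spanning_trees:
  assumes "\<And>i. i < k \<Longrightarrow> U i \<in> spanning_trees (Vs i) (Es i)"
  shows "(\<Union>i<k. U i) \<in> spanning_trees V E"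
    and "\<And>j. j < k \<Longrightarrow> (\<Union>i<k. U i) \<inter> Es j = U j"
proof -
  have U: "U i \<subseteq> Es i" if "i < k" for i using assms[OF that] unfolding spanning_trees_def by simp
  show "(\<Union>i<k. U i) \<inter> Es j = U j" if "j < k" for j using Union_Int_Es[OF U that] .
  then show "(\<Union>i<k. U i) \<in> spanning_trees V E"
    using U assms by (intro spanning_tree_glue) auto
qed

section \<open>Gluing automorphisms of the components\<close>

lemma component_aut_image_edge:
  assumes \<tau>: "\<tau> \<in> aut_or (Vs i) (Es i) (ss i) (ts i)" and i: "i < k" and e: "e \<in> Es i"
  shows "\<tau> ` e \<in> Es i"
proof -
  obtain x y where xy: "e = {x, y}" "x \<in> Vs i" "y \<in> Vs i" using component_edge[OF i e] by blast
  have "automorphism (Vs i) (Es i) \<tau>" using \<tau> unfolding aut_or_iff by simp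
  then show ?thesis using automorphism_edge_iff[OF _ xy(2,3)] xy(1) e by simp
qed

text \<open>A gate shared by two components is fixed by both component maps, so the choice made by
  \<open>SOME\<close> is irrelevant (\<open>glue_maps_eq\<close>).\<close>

definition glue_maps :: "(nat \<Rightarrow> 'a \<Rightarrow> 'a) \<Rightarrow> 'a \<Rightarrow> 'a" where
  "glue_maps \<sigma>s x = (if \<exists>i<k. x \<in> Vs i then \<sigma>s (SOME i. i < k \<and> x \<in> Vs i) x else x)"

context
  fixes \<sigma>s :: "nat \<Rightarrow> 'a \<Rightarrow> 'a"
  assumes component_aut: "\<And>i. i < k \<Longrightarrow> \<sigma>s i \<in> aut_or (Vs i) (Es i) (ss i) (ts i)"
begin

lemma component_automorphism: "i < k \<Longrightarrow> automorphism (Vs i) (Es i) (\<sigma>s i)"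
  and component_aut_ss: "i < k \<Longrightarrow> \<sigma>s i (ss i) = ss i"
  and component_aut_ts: "i < k \<Longrightarrow> \<sigma>s i (ts i) = ts i"
  using component_aut[unfolded aut_or_iff] by simp_all

lemma component_aut_fixes_shared:
  assumes "i < k" "j < k" "i \<noteq> j" "x \<in> Vs i" "x \<in> Vs j"
  shows "\<sigma>s i x = x"
  using Vs_Int_ends[OF assms] component_aut_ss[OF assms(1)] component_aut_ts[OF assms(1)] by auto

lemma component_aut_into_other:
  assumes i: "i < k" and j: "j < k" "i \<noteq> j" and x: "x \<in> Vs i" and \<sigma>x: "\<sigma>s i x \<in> Vs j"
  shows "\<sigma>s i x = x"
proof -
  have \<sigma>x_i: "\<sigma>s i x \<in> Vs i" using automorphism_in[OF component_automorphism[OF i] x] .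
  then have "\<sigma>s i (\<sigma>s i x) = \<sigma>s i x" using component_aut_fixes_shared[OF i j \<sigma>x_i \<sigma>x] by simp
  then show ?thesis using automorphism_inj[OF component_automorphism[OF i] \<sigma>x_i x] by simp
qed

lemma glue_maps_eq:
  assumes i: "i < k" and x: "x \<in> Vs i"
  shows "glue_maps \<sigma>s x = \<sigma>s i x"
proof -
  have ex: "\<exists>i. i < k \<and> x \<in> Vs i" using i x by blast
  define m where "m = (SOME i. i < k \<and> x \<in> Vs i)"
  have m: "m < k" "x \<in> Vs m" using someI_ex[OF ex] unfolding m_def by auto
  have "glue_maps \<sigma>s x = \<sigma>s m x" unfolding glue_maps_def m_def using ex by auto
  then show ?thesis
    using component_aut_fixes_shared[OF m(1) i _ m(2) x] component_aut_fixes_shared[OF i m(1) _ x m(2)]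
    by (cases "m = i") auto
qed

lemma glue_maps_in_Vs_iff:
  assumes x: "x \<in> V" and i: "i < k"
  shows "glue_maps \<sigma>s x \<in> Vs i \<longleftrightarrow> x \<in> Vs i"
proof -
  obtain m where m: "m < k" "x \<in> Vs m" using x by blast
  have gx: "glue_maps \<sigma>s x = \<sigma>s m x" using glue_maps_eq[OF m] .
  show ?thesis
  proof (cases "m = i")
    case True
    then show ?thesis using gx m automorphism_in[OF component_automorphism[OF i]] by simp
  next
    case False
    show ?thesis
    proof
      assume "glue_maps \<sigma>s x \<in> Vs i"
      then show "x \<in> Vs i" using component_aut_into_other[OF m(1) i False m(2)] gx by simp
    next
      assume "x \<in> Vs i"
      then show "glue_maps \<sigma>s x \<in> Vs i" using component_aut_fixes_shared[OF m(1) i False m(2)] gx by simp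
    qed
  qed
qed

lemma inj_on_glue_maps: "inj_on (glue_maps \<sigma>s) V"
proof (rule inj_onI)
  fix x y assume x: "x \<in> V" and y: "y \<in> V" and eq: "glue_maps \<sigma>s x = glue_maps \<sigma>s y"
  obtain i where i: "i < k" "x \<in> Vs i" using x by blast
  have "glue_maps \<sigma>s y \<in> Vs i" using eq glue_maps_in_Vs_iff[OF x i(1)] i(2) by simp
  then have "y \<in> Vs i" using glue_maps_in_Vs_iff[OF y i(1)] by simp
  then show "x = y"
    using eq glue_maps_eq[OF i] glue_maps_eq[OF i(1)]
      automorphism_inj[OF component_automorphism[OF i(1)] i(2)] by simp
qed

lemma glue_maps_image: "glue_maps \<sigma>s ` V = V"
proof (intro equalityI subsetI)
  fix w assume "w \<in> glue_maps \<sigma>s ` V"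
  then obtain x i where x: "w = glue_maps \<sigma>s x" "i < k" "x \<in> Vs i" by blast
  then have "w \<in> Vs i"
    using glue_maps_eq[OF x(2,3)] automorphism_in[OF component_automorphism[OF x(2)] x(3)] by simp
  then show "w \<in> V" using x(2) by blast
next
  fix w assume "w \<in> V"
  then obtain i where i: "i < k" "w \<in> Vs i" by blast
  then obtain x where x: "x \<in> Vs i" "\<sigma>s i x = w"
    using automorphism_surj[OF component_automorphism[OF i(1)]] by blast
  then have "w = glue_maps \<sigma>s x" using glue_maps_eq[OF i(1) x(1)] by simp
  moreover have "x \<in> V" using x(1) i(1) by blast
  ultimately show "w \<in> glue_maps \<sigma>s ` V" by blast
qed

lemma glue_maps_edge_iff_component:
  assumes i: "i < k" "x \<in> Vs i" "y \<in> Vs i"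
  shows "{glue_maps \<sigma>s x, glue_maps \<sigma>s y} \<in> E \<longleftrightarrow> {x, y} \<in> E"
proof -
  have "\<sigma>s i x \<in> Vs i" "\<sigma>s i y \<in> Vs i"
    using automorphism_in[OF component_automorphism[OF i(1)]] i by auto
  then show ?thesis
    using glue_maps_eq[OF i(1,2)] glue_maps_eq[OF i(1,3)] E_iff_component_edge[OF i(1)]
      automorphism_edge_iff[OF component_automorphism[OF i(1)] i(2,3)] i by simp
qed

lemma glue_maps_edge_iff:
  assumes x: "x \<in> V" and y: "y \<in> V"
  shows "{glue_maps \<sigma>s x, glue_maps \<sigma>s y} \<in> E \<longleftrightarrow> {x, y} \<in> E"
proof
  assume e: "{glue_maps \<sigma>s x, glue_maps \<sigma>s y} \<in> E"
  then obtain i where i: "i < k" "glue_maps \<sigma>s x \<in> Vs i" "glue_maps \<sigma>s y \<in> Vs i"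
    by (rule E_edgeE)
  then have "x \<in> Vs i" "y \<in> Vs i"
    using glue_maps_in_Vs_iff[OF x i(1)] glue_maps_in_Vs_iff[OF y i(1)] by simp_all
  then show "{x, y} \<in> E" using glue_maps_edge_iff_component[OF i(1)] e by simp
next
  assume "{x, y} \<in> E"
  then obtain i where i: "i < k" "x \<in> Vs i" "y \<in> Vs i" by (rule E_edgeE)
  then show "{glue_maps \<sigma>s x, glue_maps \<sigma>s y} \<in> E"
    using glue_maps_edge_iff_component[OF i] \<open>{x, y} \<in> E\<close> by simp
qed

lemma glue_maps_aut_or: "glue_maps \<sigma>s \<in> aut_or V E s t"
proof -
  have "glue_maps \<sigma>s s = s"
    using glue_maps_eq[OF _ s_in] component_aut_ss[of 0] ss_0 two_le_k by simp
  moreover have "glue_maps \<sigma>s t = t"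
    using glue_maps_eq[OF _ t_in] component_aut_ts[of "k - 1"] ts_last two_le_k by simp
  moreover have "bij_betw (glue_maps \<sigma>s) V V"
    using inj_on_glue_maps glue_maps_image by (simp add: bij_betw_def)
  moreover have "\<forall>x\<in>V. \<forall>y\<in>V. {x, y} \<in> E \<longleftrightarrow> {glue_maps \<sigma>s x, glue_maps \<sigma>s y} \<in> E"
    using glue_maps_edge_iff by simp
  ultimately show ?thesis unfolding aut_or_iff automorphism_def by simp
qed

lemma act_glue_maps:
  assumes TE: "T \<subseteq> E"
  shows "act (glue_maps \<sigma>s) T = (\<Union>i<k. act (\<sigma>s i) (T \<inter> Es i))"
proof -
  have eq: "glue_maps \<sigma>s ` e = \<sigma>s i ` e" if i: "i < k" and e: "e \<in> Es i" for i e
  proof -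
    obtain x y where "e = {x, y}" "x \<in> Vs i" "y \<in> Vs i" using component_edge[OF i e] by blast
    then show ?thesis using glue_maps_eq[OF i] by simp
  qed
  show ?thesis
    unfolding act_def
  proof (intro equalityI subsetI)
    fix e' assume "e' \<in> (\<lambda>e. glue_maps \<sigma>s ` e) ` T"
    then obtain e where e: "e \<in> T" "e' = glue_maps \<sigma>s ` e" by blast
    then obtain i where i: "i < k" "e \<in> Es i" using TE by blast
    then have "e' = \<sigma>s i ` e" using e eq by simp
    then show "e' \<in> (\<Union>i<k. (\<lambda>e. \<sigma>s i ` e) ` (T \<inter> Es i))" using e(1) i by blast
  next
    fix e' assume "e' \<in> (\<Union>i<k. (\<lambda>e. \<sigma>s i ` e) ` (T \<inter> Es i))"
    then obtain i e where ie: "i < k" "e \<in> T" "e \<in> Es i" "e' = \<sigma>s i ` e" by blast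
    then have "e' = glue_maps \<sigma>s ` e" using eq by simp
    then show "e' \<in> (\<lambda>e. glue_maps \<sigma>s ` e) ` T" using ie(2) by blast
  qed
qed

end

end

section \<open>Oriented series-parallel graphs\<close>

lemma osp_two_terminal: "osp V E s t \<Longrightarrow> two_terminal_graph V E s t"
proof (induction rule: osp.induct)
  case (edge s t)
  have "\<exists>x y. {s, t} = {x, y} \<and> x \<noteq> y \<and> x \<in> {s, t} \<and> y \<in> {s, t}" using edge by blast
  then show ?case unfolding two_terminal_graph_def using edge by simp
next
  case (serial k Vs Es ss ts s t)
  then interpret S: serial_composition k Vs Es ss ts s t by unfold_locales auto
  show ?case by (rule S.two_terminal_graph_union)
next
  case (parallel k Vs Es s t)
  have "0 < k" using parallel.hyps(1) by simp
  then have "two_terminal_graph (Vs 0) (Es 0) s t" using parallel.IH by blast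
  then have "s \<in> (\<Union>i<k. Vs i)" "t \<in> (\<Union>i<k. Vs i)" "s \<noteq> t"
    using \<open>0 < k\<close> unfolding two_terminal_graph_def by blast+
  moreover have "\<exists>x y. e = {x, y} \<and> x \<noteq> y \<and> x \<in> (\<Union>i<k. Vs i) \<and> y \<in> (\<Union>i<k. Vs i)"
    if e: "e \<in> (\<Union>i<k. Es i)" for e
  proof -
    obtain i where i: "i < k" "e \<in> Es i" using e by blast
    then have "two_terminal_graph (Vs i) (Es i) s t" using parallel.IH by blast
    then obtain x y where "e = {x, y}" "x \<noteq> y" "x \<in> Vs i" "y \<in> Vs i"
      using i(2) unfolding two_terminal_graph_def by blast
    then show ?thesis using i(1) by blast
  qed
  ultimately show ?case unfolding two_terminal_graph_def by blast
qed

lemma serial_composition_of_osp: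
  "2 \<le> k \<Longrightarrow> (\<And>i. i < k \<Longrightarrow> osp (Vs i) (Es i) (ss i) (ts i)) \<Longrightarrow> serial_conds k Vs ss ts s t \<Longrightarrow>
   serial_composition k Vs Es ss ts s t"
  by unfold_locales (auto intro: osp_two_terminal)

lemma osp_reach: "osp V E s t \<Longrightarrow> reach E V s t"
proof (induction rule: osp.induct)
  case (edge s t)
  then show ?case unfolding reach_def by (intro exI[of _ "[s, t]"]) auto
next
  case (serial k Vs Es ss ts s t)
  then interpret S: serial_composition k Vs Es ss ts s t
    by (intro serial_composition_of_osp) auto
  have pieces: "\<forall>m<k. reach S.E S.V (ss m) (ts m)"
  proof (intro allI impI)
    fix m assume m: "m < k"
    then have "reach (Es m) (Vs m) (ss m) (ts m)" using serial.IH by blast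
    then show "reach S.E S.V (ss m) (ts m)" by (rule reach_mono) (use m in auto)
  qed
  have km: "k - 1 < k" and "s \<in> S.V" using S.two_le_k S.s_in by auto
  then have "reach S.E S.V s (ss (k - 1))" using S.reach_ss_chain pieces by simp
  moreover have "reach S.E S.V (ss (k - 1)) t" using pieces km S.ts_last by auto
  ultimately show ?case by (rule reach_trans)
next
  case (parallel k Vs Es s t)
  have "0 < k" using parallel.hyps(1) by simp
  then have "reach (Es 0) (Vs 0) s t" using parallel.IH by blast
  then show ?case by (rule reach_mono) (use \<open>0 < k\<close> in auto)
qed

lemma osp_reach_avoiding_sink:
  "osp V E s t \<Longrightarrow> \<forall>v\<in>V. v \<noteq> t \<longrightarrow> reach E (V - {t}) s v"
proof (induction rule: osp.induct)
  case (edge s t)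
  then show ?case using reach_refl[of s "{s, t} - {t}"] by auto
next
  case (serial k Vs Es ss ts s t)
  then interpret S: serial_composition k Vs Es ss ts s t
    by (intro serial_composition_of_osp) auto
  have ends: "reach (Es m) (Vs m) (ss m) (ts m)" if "m < k" for m
  proof -
    have "osp (Vs m) (Es m) (ss m) (ts m)" using serial.IH that by blast
    then show ?thesis by (rule osp_reach)
  qed
  have avoid: "reach (Es m) (Vs m - {ts m}) (ss m) v" if "m < k" "v \<in> Vs m" "v \<noteq> ts m" for m v
    using serial.IH that by blast
  have "k - 1 < k" using S.two_le_k by simp
  from S.reach_prefix_avoiding_ts[OF ends avoid this] show ?case
    using S.prefix_vertices_last S.ts_last by simp
next
  case (parallel k Vs Es s t)
  show ?case
  proof (intro ballI impI)
    fix v assume v: "v \<in> (\<Union>i<k. Vs i)" "v \<noteq> t"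
    then obtain i where i: "i < k" "v \<in> Vs i" by blast
    then have "reach (Es i) (Vs i - {t}) s v" using parallel.IH v(2) by blast
    then show "reach (\<Union>i<k. Es i) ((\<Union>i<k. Vs i) - {t}) s v" by (rule reach_mono) (use i in auto)
  qed
qed

lemma nonserial_osp_reach_avoiding:
  assumes osp: "osp V E s t" and nonserial: "\<not> serial_superedge V E s t"
    and c: "c \<in> V" "c \<noteq> s" "c \<noteq> t"
  shows "reach E (V - {c}) s t"
  using osp
proof (cases rule: osp.cases)
  case edge then show ?thesis using c by auto
next
  case serial
  then show ?thesis using nonserial unfolding serial_superedge_def by blast
next
  case (parallel k Vs Es)
  \<comment> \<open>\<open>c\<close> lies in one branch only, and any other branch joins \<open>s\<close> to \<open>t\<close>\<close>
  obtain j where j: "j < k" "c \<in> Vs j" using c(1) parallel(1) by blast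
  define j' where "j' = (if j = 0 then 1 else (0::nat))"
  have j': "j' < k" "j' \<noteq> j" using parallel(3) unfolding j'_def by auto
  have "Vs j \<inter> Vs j' = {s, t}" using parallel(5) j(1) j' by simp
  then have "c \<notin> Vs j'" using j(2) c by blast
  have "reach (Es j') (Vs j') s t" using parallel(4) j'(1) by (simp add: osp_reach)
  then show ?thesis by (rule reach_mono) (use parallel(1,2) j'(1) \<open>c \<notin> Vs j'\<close> in auto)
qed

section \<open>Automorphisms of a serial composition of non-serial graphs\<close>

locale nonserial_serial_composition = serial_composition +
  assumes osp_component: "\<And>i. i < k \<Longrightarrow> osp (Vs i) (Es i) (ss i) (ts i)"
    and nonserial_component: "\<And>i. i < k \<Longrightarrow> \<not> serial_superedge (Vs i) (Es i) (ss i) (ts i)"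
begin

lemma component_reach_ts: "i < k \<Longrightarrow> reach (Es i) (Vs i) (ss i) (ts i)"
  by (rule osp_reach[OF osp_component])

lemma component_reach_avoiding_ts:
  "i < k \<Longrightarrow> v \<in> Vs i \<Longrightarrow> v \<noteq> ts i \<Longrightarrow> reach (Es i) (Vs i - {ts i}) (ss i) v"
  using osp_reach_avoiding_sink[OF osp_component] by blast

lemma component_no_cut_vertex:
  "i < k \<Longrightarrow> c \<in> Vs i \<Longrightarrow> c \<noteq> ss i \<Longrightarrow> c \<noteq> ts i \<Longrightarrow> reach (Es i) (Vs i - {c}) (ss i) (ts i)"
  by (rule nonserial_osp_reach_avoiding[OF osp_component nonserial_component])

lemma prefix_vertices_iff_reach:
  assumes j: "j < k" and v: "v \<in> V"
  shows "v \<in> prefix_vertices j \<longleftrightarrow> v = ts j \<or> reach E (V - {ts j}) s v"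
proof
  assume "v \<in> prefix_vertices j"
  then show "v = ts j \<or> reach E (V - {ts j}) s v"
    using reach_prefix_avoiding_ts[OF component_reach_ts component_reach_avoiding_ts j] by blast
qed (use reach_avoiding_ts_in_prefix[OF j] ts_in_prefix[OF j] in blast)

text \<open>The vertices whose removal separates \<open>x\<close> from \<open>s\<close>, counting \<open>s\<close> and \<open>x\<close> themselves.\<close>

definition separators :: "'a \<Rightarrow> 'a set" where
  "separators x = {c \<in> V. \<not> reach E (V - {c}) s x}"

lemma separators_ts_subset:
  assumes j: "j < k"
  shows "separators (ts j) \<subseteq> insert s (ts ` {..j})"
proof
  fix c assume c: "c \<in> separators (ts j)"
  show "c \<in> insert s (ts ` {..j})"
  proof (rule ccontr)
    assume nc: "c \<notin> insert s (ts ` {..j})"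
    have piece: "reach E (V - {c}) (ss m) (ts m)" if m: "m \<le> j" for m
    proof -
      have mk: "m < k" using m j by simp
      have ctm: "c \<noteq> ts m" using nc m by auto
      show ?thesis
      proof (cases "c \<in> Vs m")
        case True
        have "c \<noteq> ss m"
          using ss_0 ss_eq_ts_pred[OF _ mk] nc m by (cases "m = 0") auto
        then have "reach (Es m) (Vs m - {c}) (ss m) (ts m)"
          using component_no_cut_vertex[OF mk True _ ctm] by simp
        then show ?thesis by (rule reach_mono) (use mk in auto)
      next
        case False
        show ?thesis by (rule reach_mono[OF component_reach_ts[OF mk]]) (use mk False in auto)
      qed
    qed
    have "s \<in> V - {c}" using nc s_in two_le_k by auto
    then have "reach E (V - {c}) s (ss j)" using reach_ss_chain[OF _ j] piece by simp
    then have "reach E (V - {c}) s (ts j)" using reach_trans piece[of j] by simp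
    then show False using c unfolding separators_def by simp
  qed
qed

lemma gates_in_separators:
  assumes j: "j < k"
  shows "insert s (ts ` {..j}) \<subseteq> separators (ts j)"
proof
  fix c assume c: "c \<in> insert s (ts ` {..j})"
  have "c \<in> V"
  proof (cases "c = s")
    case False
    then obtain i where "i \<le> j" "c = ts i" using c by auto
    then show ?thesis using ts_in[of i] j by (intro UN_I[of i]) auto
  qed (use s_in two_le_k in auto)
  moreover have "\<not> reach E (V - {c}) s (ts j)"
  proof
    assume r: "reach E (V - {c}) s (ts j)"
    then have "c \<noteq> s" "c \<noteq> ts j" using reach_in[OF r] by auto
    moreover obtain i where "i \<le> j" "c = ts i" using c \<open>c \<noteq> s\<close> by auto
    ultimately have i: "i < j" "c = ts i" by (auto simp: le_less)
    then have "ts j \<in> prefix_vertices i"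
      using reach_avoiding_ts_in_prefix[of i "ts j"] r j by simp
    then show False using ts_notin_prefix[OF i(1) j] by simp
  qed
  ultimately show "c \<in> separators (ts j)" unfolding separators_def by simp
qed

lemma separators_ts: "j < k \<Longrightarrow> separators (ts j) = insert s (ts ` {..j})"
  by (intro equalityI separators_ts_subset gates_in_separators)

lemma card_separators_ts: "j < k \<Longrightarrow> card (separators (ts j)) = j + 2"
proof -
  assume j: "j < k"
  have "inj_on ts {..j}" using ts_inj j unfolding inj_on_def by (meson atMost_iff le_less_trans)
  moreover have "s \<notin> ts ` {..j}"
  proof
    assume "s \<in> ts ` {..j}"
    then obtain m where "m \<le> j" "s = ts m" by auto
    then show False using ts_ne_s[of m] j by simp
  qed
  ultimately show ?thesis using separators_ts[OF j] by (simp add: card_image)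
qed

lemma separators_automorphism:
  assumes a: "automorphism V E \<sigma>" and \<sigma>s: "\<sigma> s = s" and x: "x \<in> V"
  shows "separators (\<sigma> x) = \<sigma> ` separators x"
proof -
  have "s \<in> V" using s_in two_le_k by auto
  then have sep: "reach E (V - {\<sigma> c}) s (\<sigma> x) \<longleftrightarrow> reach E (V - {c}) s x" if c: "c \<in> V" for c
    using reach_automorphism_iff[OF a _ _ x, of "V - {c}" s] automorphism_image_Diff[OF a c] \<sigma>s by simp
  show ?thesis
  proof (intro equalityI subsetI)
    fix c' assume c': "c' \<in> separators (\<sigma> x)"
    then obtain c where c: "c \<in> V" "\<sigma> c = c'"
      using automorphism_surj[OF a] unfolding separators_def by blast
    then show "c' \<in> \<sigma> ` separators x" using c' sep[OF c(1)] unfolding separators_def by auto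
  next
    fix c' assume "c' \<in> \<sigma> ` separators x"
    then obtain c where c: "c \<in> V" "\<not> reach E (V - {c}) s x" "c' = \<sigma> c"
      unfolding separators_def by blast
    then show "c' \<in> separators (\<sigma> x)"
      using sep[OF c(1)] automorphism_in[OF a c(1)] unfolding separators_def by simp
  qed
qed

text \<open>An oriented automorphism permutes the separators of \<open>t\<close>, i.e. \<open>s\<close> and the gates, and it
  cannot move a gate \<open>ts j\<close> since \<open>j\<close> is determined by the number of separators of \<open>ts j\<close>.\<close>

lemma aut_or_fixes_ts:
  assumes \<sigma>: "\<sigma> \<in> aut_or V E s t" and j: "j < k"
  shows "\<sigma> (ts j) = ts j"
proof -
  have a: "automorphism V E \<sigma>" and \<sigma>s: "\<sigma> s = s" and \<sigma>t: "\<sigma> t = t"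
    using \<sigma> unfolding aut_or_iff by auto
  have km: "k - 1 < k" and sV: "s \<in> V" and tV: "t \<in> V" and tjV: "ts j \<in> V"
    using two_le_k s_in t_in ts_in[OF j] j by auto
  have sep_t: "separators t = insert s (ts ` {..k - 1})"
    using separators_ts[OF km] ts_last by simp
  have "\<sigma> (ts j) \<in> separators t"
    using separators_automorphism[OF a \<sigma>s tV] \<sigma>t sep_t j by auto
  moreover have "\<sigma> (ts j) \<noteq> \<sigma> s" using automorphism_inj[OF a tjV sV] ts_ne_s[OF j] by simp
  ultimately obtain m where "m \<le> k - 1" "\<sigma> (ts j) = ts m" using sep_t \<sigma>s by auto
  then have m: "m < k" "\<sigma> (ts j) = ts m" using two_le_k by auto
  have "separators (ts m) = \<sigma> ` separators (ts j)"
    using separators_automorphism[OF a \<sigma>s tjV] m(2) by simp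
  moreover have "inj_on \<sigma> (separators (ts j))"
  proof (rule inj_on_subset)
    show "inj_on \<sigma> V" using a unfolding automorphism_def bij_betw_def by simp
  qed (auto simp: separators_def)
  ultimately have "card (separators (ts m)) = card (separators (ts j))" by (simp add: card_image)
  then have "m = j" using card_separators_ts m(1) j by simp
  then show ?thesis using m(2) by simp
qed

lemma aut_or_prefix_iff:
  assumes \<sigma>: "\<sigma> \<in> aut_or V E s t" and j: "j < k" and v: "v \<in> V"
  shows "\<sigma> v \<in> prefix_vertices j \<longleftrightarrow> v \<in> prefix_vertices j"
proof -
  have a: "automorphism V E \<sigma>" and \<sigma>s: "\<sigma> s = s" using \<sigma> unfolding aut_or_iff by auto
  have sV: "s \<in> V" and tjV: "ts j \<in> V" using s_in ts_in[OF j] j two_le_k by auto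
  have "\<sigma> v = ts j \<longleftrightarrow> v = ts j"
    using aut_or_fixes_ts[OF \<sigma> j] automorphism_inj[OF a v tjV] by simp
  moreover have "reach E (V - {ts j}) s (\<sigma> v) \<longleftrightarrow> reach E (V - {ts j}) s v"
    using reach_automorphism_iff[OF a _ sV v, of "V - {ts j}"] automorphism_image_Diff[OF a tjV]
      aut_or_fixes_ts[OF \<sigma> j] \<sigma>s by simp
  ultimately show ?thesis
    using prefix_vertices_iff_reach[OF j v] prefix_vertices_iff_reach[OF j automorphism_in[OF a v]] by simp
qed

lemma aut_or_Vs_iff:
  assumes \<sigma>: "\<sigma> \<in> aut_or V E s t" and i: "i < k" and v: "v \<in> V"
  shows "\<sigma> v \<in> Vs i \<longleftrightarrow> v \<in> Vs i"
proof (cases "i = 0")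
  case False
  have a: "automorphism V E \<sigma>" using \<sigma> unfolding aut_or_iff by simp
  have i': "i - 1 < k" using i by simp
  then have "\<sigma> v = ts (i - 1) \<longleftrightarrow> v = ts (i - 1)"
    using aut_or_fixes_ts[OF \<sigma> i'] automorphism_inj[OF a v] ts_in[OF i'] by (metis UN_I lessThan_iff)
  then show ?thesis
    using Vs_iff_prefix[OF i] aut_or_prefix_iff[OF \<sigma> i v] aut_or_prefix_iff[OF \<sigma> i' v] by simp
qed (use Vs_iff_prefix[OF i] aut_or_prefix_iff[OF \<sigma> i v] in simp)

lemma aut_or_image_Vs:
  assumes \<sigma>: "\<sigma> \<in> aut_or V E s t" and i: "i < k"
  shows "\<sigma> ` Vs i = Vs i"
proof -
  have a: "automorphism V E \<sigma>" using \<sigma> unfolding aut_or_iff by simp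
  have sub: "Vs i \<subseteq> V" using i by blast
  show ?thesis
  proof (intro equalityI subsetI)
    fix w assume "w \<in> \<sigma> ` Vs i"
    then obtain v where v: "v \<in> Vs i" "w = \<sigma> v" by blast
    moreover have "v \<in> V" using v(1) sub by blast
    ultimately show "w \<in> Vs i" using aut_or_Vs_iff[OF \<sigma> i] by simp
  next
    fix w assume w: "w \<in> Vs i"
    then have "w \<in> V" using sub by blast
    then obtain v where v: "v \<in> V" "\<sigma> v = w" using automorphism_surj[OF a] by blast
    have "v \<in> Vs i" using w unfolding v(2)[symmetric] aut_or_Vs_iff[OF \<sigma> i v(1)] .
    then show "w \<in> \<sigma> ` Vs i" using v(2)[symmetric] by (rule rev_image_eqI)
  qed
qed

lemma aut_or_restrict:
  assumes \<sigma>: "\<sigma> \<in> aut_or V E s t" and i: "i < k"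
  shows "\<sigma> \<in> aut_or (Vs i) (Es i) (ss i) (ts i)"
proof -
  have a: "automorphism V E \<sigma>" using \<sigma> unfolding aut_or_iff by simp
  have sub: "Vs i \<subseteq> V" using i by blast
  have "inj_on \<sigma> V" using a unfolding automorphism_def bij_betw_def by simp
  then have inj: "inj_on \<sigma> (Vs i)" using inj_on_subset[OF _ sub] by blast
  have img: "\<sigma> ` Vs i = Vs i" by (rule aut_or_image_Vs[OF \<sigma> i])
  have edges: "\<forall>x\<in>Vs i. \<forall>y\<in>Vs i. {x, y} \<in> Es i \<longleftrightarrow> {\<sigma> x, \<sigma> y} \<in> Es i"
  proof (intro ballI)
    fix x y assume xy: "x \<in> Vs i" "y \<in> Vs i"
    have \<sigma>xy: "\<sigma> x \<in> Vs i" "\<sigma> y \<in> Vs i" using img xy by blast+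
    have "{x, y} \<in> Es i \<longleftrightarrow> {x, y} \<in> E" using E_iff_component_edge[OF i xy] by simp
    also have "\<dots> \<longleftrightarrow> {\<sigma> x, \<sigma> y} \<in> E" by (rule automorphism_edge_iff[OF a, symmetric]) (use xy sub in auto)
    also have "\<dots> \<longleftrightarrow> {\<sigma> x, \<sigma> y} \<in> Es i" using E_iff_component_edge[OF i \<sigma>xy] by simp
    finally show "{x, y} \<in> Es i \<longleftrightarrow> {\<sigma> x, \<sigma> y} \<in> Es i" .
  qed
  have ss: "\<sigma> (ss i) = ss i"
  proof (cases "i = 0")
    case True
    then show ?thesis using \<sigma> ss_0 unfolding aut_or_iff by simp
  next
    case False
    then show ?thesis using ss_eq_ts_pred[OF _ i] aut_or_fixes_ts[OF \<sigma>, of "i - 1"] i by simp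
  qed
  show ?thesis
    unfolding aut_or_iff automorphism_def
  proof (intro conjI)
    show "bij_betw \<sigma> (Vs i) (Vs i)" using inj img by (simp add: bij_betw_def)
  qed (fact edges ss aut_or_fixes_ts[OF \<sigma> i])+
qed

lemma act_Int_Es:
  assumes \<sigma>: "\<sigma> \<in> aut_or V E s t" and TE: "T \<subseteq> E" and i: "i < k"
  shows "act \<sigma> T \<inter> Es i = act \<sigma> (T \<inter> Es i)"
  unfolding act_def
proof (intro equalityI subsetI)
  fix e' assume "e' \<in> (\<lambda>e. \<sigma> ` e) ` T \<inter> Es i"
  then obtain e where e: "e \<in> T" "e' = \<sigma> ` e" "\<sigma> ` e \<in> Es i" by blast
  then obtain m where m: "m < k" "e \<in> Es m" using TE by blast
  have "\<sigma> ` e \<in> Es m" by (rule component_aut_image_edge[OF aut_or_restrict[OF \<sigma> m(1)] m])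
  then have "m = i" using Es_disjoint[OF m(1) i] e(3) by blast
  then show "e' \<in> (\<lambda>e. \<sigma> ` e) ` (T \<inter> Es i)" using e m by blast
next
  fix e' assume "e' \<in> (\<lambda>e. \<sigma> ` e) ` (T \<inter> Es i)"
  then obtain e where "e \<in> T" "e \<in> Es i" "e' = \<sigma> ` e" by blast
  then show "e' \<in> (\<lambda>e. \<sigma> ` e) ` T \<inter> Es i"
    using component_aut_image_edge[OF aut_or_restrict[OF \<sigma> i] i] by blast
qed

lemma orbit_iff_component_orbits:
  assumes TE: "T \<subseteq> E" and TE': "T' \<subseteq> E"
  shows "T' \<in> orbit (aut_or V E s t) T \<longleftrightarrow>
         (\<forall>i<k. T' \<inter> Es i \<in> orbit (aut_or (Vs i) (Es i) (ss i) (ts i)) (T \<inter> Es i))"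
proof
  assume "T' \<in> orbit (aut_or V E s t) T"
  then obtain \<sigma> where \<sigma>: "\<sigma> \<in> aut_or V E s t" and T': "T' = act \<sigma> T"
    unfolding mem_orbit_iff by blast
  show "\<forall>i<k. T' \<inter> Es i \<in> orbit (aut_or (Vs i) (Es i) (ss i) (ts i)) (T \<inter> Es i)"
    using act_Int_Es[OF \<sigma> TE] aut_or_restrict[OF \<sigma>] T' unfolding mem_orbit_iff by blast
next
  assume "\<forall>i<k. T' \<inter> Es i \<in> orbit (aut_or (Vs i) (Es i) (ss i) (ts i)) (T \<inter> Es i)"
  then have "\<forall>i\<in>{..<k}. \<exists>\<tau>. \<tau> \<in> aut_or (Vs i) (Es i) (ss i) (ts i) \<and> T' \<inter> Es i = act \<tau> (T \<inter> Es i)"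
    unfolding mem_orbit_iff by blast
  from bchoice[OF this] obtain \<sigma>s where \<sigma>s:
    "\<And>i. i < k \<Longrightarrow> \<sigma>s i \<in> aut_or (Vs i) (Es i) (ss i) (ts i)"
    "\<And>i. i < k \<Longrightarrow> T' \<inter> Es i = act (\<sigma>s i) (T \<inter> Es i)"
    by auto
  have "act (glue_maps \<sigma>s) T = (\<Union>i<k. act (\<sigma>s i) (T \<inter> Es i))"
    by (rule act_glue_maps[OF \<sigma>s(1) TE])
  also have "\<dots> = (\<Union>i<k. T' \<inter> Es i)" using \<sigma>s(2) by simp
  also have "\<dots> = T'" using TE' by blast
  finally show "T' \<in> orbit (aut_or V E s t) T"
    using glue_maps_aut_or[OF \<sigma>s(1)] unfolding mem_orbit_iff by metis
qed

lemma Union_in_orbit_iff: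
  assumes TE: "T \<subseteq> E" and W: "\<And>i. i < k \<Longrightarrow> W i \<in> spanning_trees (Vs i) (Es i)"
  shows "(\<Union>i<k. W i) \<in> orbit (aut_or V E s t) T \<longleftrightarrow>
         (\<forall>i<k. W i \<in> orbit (aut_or (Vs i) (Es i) (ss i) (ts i)) (T \<inter> Es i))"
proof -
  have "(\<Union>i<k. W i) \<subseteq> E"
    using Union_spanning_trees(1)[OF W] unfolding spanning_trees_def by blast
  then have "(\<Union>i<k. W i) \<in> orbit (aut_or V E s t) T \<longleftrightarrow>
      (\<forall>i<k. (\<Union>i<k. W i) \<inter> Es i \<in> orbit (aut_or (Vs i) (Es i) (ss i) (ts i)) (T \<inter> Es i))"
    by (rule orbit_iff_component_orbits[OF TE])
  then show ?thesis using Union_spanning_trees(2)[OF W] by simp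
qed

lemma ex1_Union_representatives_in_orbit:
  assumes R: "\<And>i. i < k \<Longrightarrow>
    orbit_transversal (aut_or (Vs i) (Es i) (ss i) (ts i)) (spanning_trees (Vs i) (Es i)) (R i)"
    and T: "T \<in> spanning_trees V E"
  shows "\<exists>!T'. T' \<in> {(\<Union>i<k. T i) | T. \<forall>i<k. T i \<in> R i} \<and> T' \<in> orbit (aut_or V E s t) T"
proof -
  have TE: "T \<subseteq> E" using T unfolding spanning_trees_def by simp
  have R_sub: "R i \<subseteq> spanning_trees (Vs i) (Es i)" if "i < k" for i
    using R[OF that] unfolding orbit_transversal_def by simp
  have R_unique: "\<exists>!C. C \<in> R i \<and> C \<in> orbit (aut_or (Vs i) (Es i) (ss i) (ts i)) (T \<inter> Es i)"
    if i: "i < k" for i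
    using R[OF i] spanning_tree_component[OF T i] unfolding orbit_transversal_def by simp
  have "\<forall>i\<in>{..<k}. \<exists>C. C \<in> R i \<and> C \<in> orbit (aut_or (Vs i) (Es i) (ss i) (ts i)) (T \<inter> Es i)"
    using R_unique by blast
  from bchoice[OF this] obtain C where C:
    "\<And>i. i < k \<Longrightarrow> C i \<in> R i"
    "\<And>i. i < k \<Longrightarrow> C i \<in> orbit (aut_or (Vs i) (Es i) (ss i) (ts i)) (T \<inter> Es i)"
    by auto
  show ?thesis
  proof (rule ex1I)
    have "C i \<in> spanning_trees (Vs i) (Es i)" if "i < k" for i using R_sub C(1) that by blast
    then have "(\<Union>i<k. C i) \<in> orbit (aut_or V E s t) T"
      using Union_in_orbit_iff[OF TE] C(2) by simp
    then show "(\<Union>i<k. C i) \<in> {(\<Union>i<k. T i) | T. \<forall>i<k. T i \<in> R i} \<and>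
          (\<Union>i<k. C i) \<in> orbit (aut_or V E s t) T"
      using C(1) by blast
  next
    fix Y assume "Y \<in> {(\<Union>i<k. T i) | T. \<forall>i<k. T i \<in> R i} \<and> Y \<in> orbit (aut_or V E s t) T"
    then obtain W where Y: "Y = (\<Union>i<k. W i)" and W: "\<And>i. i < k \<Longrightarrow> W i \<in> R i"
      and "Y \<in> orbit (aut_or V E s t) T" by blast
    have "W i \<in> spanning_trees (Vs i) (Es i)" if "i < k" for i using R_sub W that by blast
    then have W_orbit: "\<forall>i<k. W i \<in> orbit (aut_or (Vs i) (Es i) (ss i) (ts i)) (T \<inter> Es i)"
      using Union_in_orbit_iff[OF TE] \<open>Y \<in> orbit (aut_or V E s t) T\<close> Y by simp
    have "W i = C i" if i: "i < k" for i
      using R_unique[OF i] W[OF i] C(1,2)[OF i] W_orbit i by blast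
    then show "Y = (\<Union>i<k. C i)" using Y by simp
  qed
qed

lemma orbit_transversal_unions:
  assumes R: "\<And>i. i < k \<Longrightarrow>
    orbit_transversal (aut_or (Vs i) (Es i) (ss i) (ts i)) (spanning_trees (Vs i) (Es i)) (R i)"
  shows "{(\<Union>i<k. T i) | T. \<forall>i<k. T i \<in> R i} \<subseteq> spanning_trees V E"
    and "orbit_transversal (aut_or V E s t) (spanning_trees V E) {(\<Union>i<k. T i) | T. \<forall>i<k. T i \<in> R i}"
proof -
  show sub: "{(\<Union>i<k. T i) | T. \<forall>i<k. T i \<in> R i} \<subseteq> spanning_trees V E"
  proof
    fix X assume "X \<in> {(\<Union>i<k. T i) | T. \<forall>i<k. T i \<in> R i}"
    then obtain W where "X = (\<Union>i<k. W i)" "\<forall>i<k. W i \<in> R i" by blast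
    then show "X \<in> spanning_trees V E"
      using Union_spanning_trees(1)[of W] R unfolding orbit_transversal_def by blast
  qed
  show "orbit_transversal (aut_or V E s t) (spanning_trees V E) {(\<Union>i<k. T i) | T. \<forall>i<k. T i \<in> R i}"
    unfolding orbit_transversal_def using sub ex1_Union_representatives_in_orbit[OF R]
    by (intro conjI ballI)
qed

end

theorem theorem5p4:
  fixes k :: nat and Vs :: "nat \<Rightarrow> 'a set" and Es :: "nat \<Rightarrow> 'a set set"
    and ss ts :: "nat \<Rightarrow> 'a" and s t :: 'a
    and \<T> :: "nat \<Rightarrow> 'a set set set"
  assumes "2 \<le> k"
    and "\<forall>i<k. osp (Vs i) (Es i) (ss i) (ts i)"
    and "\<forall>i<k. \<not> serial_superedge (Vs i) (Es i) (ss i) (ts i)"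
    and "serial_conds k Vs ss ts s t"
    and "\<forall>i<k. orbit_transversal (aut_or (Vs i) (Es i) (ss i) (ts i))
                 (spanning_trees (Vs i) (Es i)) (\<T> i)"
  shows "{(\<Union>i<k. T i) | T. \<forall>i<k. T i \<in> \<T> i}
           \<subseteq> spanning_trees (\<Union>i<k. Vs i) (\<Union>i<k. Es i)
       \<and> orbit_transversal (aut_or (\<Union>i<k. Vs i) (\<Union>i<k. Es i) s t)
           (spanning_trees (\<Union>i<k. Vs i) (\<Union>i<k. Es i))
           {(\<Union>i<k. T i) | T. \<forall>i<k. T i \<in> \<T> i}"
proof -
  interpret nonserial_serial_composition k Vs Es ss ts s t
    using assms(1-4) by unfold_locales (auto intro: osp_two_terminal)
  show ?thesis using orbit_transversal_unions[of \<T>] assms(5) by blast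
qed

end
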